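(* Let $k\ge 2$ be an even integer. For every constant $\epsilon>0$, no deterministic online algorithm is $(1-\frac{2}{k+2}+\epsilon)$-competitive for the maximum-cardinality online bipartite matching problem under vertex arrivals with a hard budget of $k$ reassignments per arrival. That is, for every deterministic online algorithm for this problem and every constant $c\ge 0$, there exists an instance on which the final matching output by the algorithm has cardinality strictly less than $(1-\frac{2}{k+2}+\epsilon)\cdot\mathsf{OPT}-c$, where $\mathsf{OPT}$ is the maximum cardinality of a matching in the full graph.
   Context: Problem: There is a bipartite graph $G=(L\cup R,E)$. The algorithm initially knows only $R$ and the budget $k$. Over $|L|$ timesteps, the vertices of $L$ arrive one at a time; when a vertex arrives, all its incident edges are revealed. At the end of each timestep the algorithm must output a matching in the graph revealed so far. The new matching $M_2$ must be obtainable from the previous matching $M_1$ (the empty matching before the first timestep) by at most $k$ (re)assignments, where the number of (re)assignments is the number of vertices having nonzero degree in $M_1\triangle M_2$. Once a vertex is matched it must remain matched at all later timesteps. An algorithm is $\alpha$-competitive if there is a constant $c\ge 0$ such that on every instance the cardinality of its final matching is at least $\alpha\cdot\mathsf{OPT}-c$. *)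

theory Defs
  imports Complex_Main
begin

text \<open>The left vertices arrive
in order; the i-th arriving left vertex (i = 0,1,...) is identified with the index i and
is described by its neighbourhood, a subset of R.\<close>

type_synonym graph = "nat set list"
type_synonym matching = "(nat \<times> nat) set"

definition edges :: "graph \<Rightarrow> (nat \<times> nat) set" where
  "edges ns = {(i, r). i < length ns \<and> r \<in> ns ! i}"

definition is_matching :: "graph \<Rightarrow> matching \<Rightarrow> bool" where
  "is_matching ns M \<longleftrightarrow> M \<subseteq> edges ns \<and>
     (\<forall>(i, r) \<in> M. \<forall>(j, s) \<in> M. (i = j \<longleftrightarrow> r = s))"

definition OPT :: "graph \<Rightarrow> nat" where
  "OPT ns = Max {card M | M. is_matching ns M}"

definition covered :: "(nat \<times> nat) set \<Rightarrow> (nat + nat) set" where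
  "covered S = {Inl i | i r. (i, r) \<in> S} \<union> {Inr r | i r. (i, r) \<in> S}"

definition reassignments :: "matching \<Rightarrow> matching \<Rightarrow> nat" where
  "reassignments M1 M2 = card (covered ((M1 - M2) \<union> (M2 - M1)))"

text \<open>A deterministic online algorithm is a function A: given the right side R and the
sequence of neighbourhoods of the left vertices that have arrived so far, it outputs its
current matching.\<close>
type_synonym algorithm = "nat set \<Rightarrow> graph \<Rightarrow> matching"

definition alg_out :: "algorithm \<Rightarrow> nat set \<Rightarrow> graph \<Rightarrow> matching" where
  "alg_out A R ns = (if ns = [] then {} else A R ns)"

definition valid_instance :: "nat set \<Rightarrow> graph \<Rightarrow> bool" where
  "valid_instance R ns \<longleftrightarrow> finite R \<and> (\<forall>N \<in> set ns. N \<subseteq> R)"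

definition valid_algorithm :: "nat \<Rightarrow> algorithm \<Rightarrow> bool" where
  "valid_algorithm k A \<longleftrightarrow>
     (\<forall>R ns N. valid_instance R ns \<longrightarrow> N \<subseteq> R \<longrightarrow>
        (let M1 = alg_out A R ns; M2 = A R (ns @ [N]) in
           is_matching (ns @ [N]) M2 \<and>
           reassignments M1 M2 \<le> k \<and>
           covered M1 \<subseteq> covered M2))"

end

theory Submission
  imports Defs "HOL-Library.Disjoint_Sets"
begin

(* Write k = 2l. The adversary builds vertex-disjoint gadgets: alternating paths
   r_0 u_0 r_1 ... u_(m-1) r_m with N(u_p) = {r_p, r_(p+1)} and m <= l. The interior right
   vertices of a path were matched when it grew, and stay matched; so once all its left vertices
   are matched, the matching on it is u_p r_(p+1) with one end free, say r_0. The next arrival is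
   then adjacent to the matched end r_m and to a fresh vertex, lengthening the path, or, when
   m = l, to r_l alone. Matching this trap vertex would force u_p r_p along the whole path, i.e.
   2(l+1) > k reassignments, so a sealed gadget keeps an unmatched left vertex forever. If no
   gadget is fully matched, a new one-vertex gadget starts.
   Lengthening or sealing lowers the potential sum_g (l + 1 - |g|) over open gadgets by one,
   and a new gadget raises it by at most l; hence within l t0 steps after any time t0 there is
   a time t at which every gadget has an unmatched left vertex. Gadgets have at most l + 1 left
   vertices, so the algorithm has matched at most l t / (l + 1) of the t arrivals, while the
   matching u_p r_p on all gadgets has size t. *)

lemma covered_Inl: "Inl a \<in> covered S \<longleftrightarrow> (\<exists>r. (a, r) \<in> S)"
  by (auto simp: covered_def)

lemma covered_Inr: "Inr r \<in> covered S \<longleftrightarrow> (\<exists>a. (a, r) \<in> S)"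
  by (auto simp: covered_def)

lemma finite_covered:
  assumes "finite S"
  shows "finite (covered S)"
proof -
  have "covered S \<subseteq> Inl ` fst ` S \<union> Inr ` snd ` S"
    by (force simp: covered_def)
  then show ?thesis
    by (rule finite_subset) (simp add: assms)
qed

lemma is_matchingI:
  assumes "M \<subseteq> edges ns"
    and "\<And>a r b s. (a, r) \<in> M \<Longrightarrow> (b, s) \<in> M \<Longrightarrow> (a = b \<longleftrightarrow> r = s)"
  shows "is_matching ns M"
  using assms unfolding is_matching_def by blast

lemma is_matching_edge: "is_matching ns M \<Longrightarrow> (a, r) \<in> M \<Longrightarrow> a < length ns \<and> r \<in> ns ! a"
  unfolding is_matching_def edges_def by blast

lemma is_matching_right_unique: "is_matching ns M \<Longrightarrow> (a, r) \<in> M \<Longrightarrow> (a, s) \<in> M \<Longrightarrow> r = s"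
  unfolding is_matching_def by fast

lemma is_matching_left_unique: "is_matching ns M \<Longrightarrow> (a, r) \<in> M \<Longrightarrow> (b, r) \<in> M \<Longrightarrow> a = b"
  unfolding is_matching_def by fast

lemma is_matching_inj_fst: "is_matching ns M \<Longrightarrow> inj_on fst M"
  unfolding inj_on_def by (metis is_matching_right_unique prod.collapse)

lemma finite_edges:
  assumes "\<forall>N\<in>set ns. finite N"
  shows "finite (edges ns)"
proof -
  have "edges ns \<subseteq> {..<length ns} \<times> \<Union>(set ns)"
    by (auto simp: edges_def) (use nth_mem in blast)
  then show ?thesis
    by (rule finite_subset) (use assms in auto)
qed

lemma finite_matching: "is_matching ns M \<Longrightarrow> \<forall>N\<in>set ns. finite N \<Longrightarrow> finite M"
  unfolding is_matching_def using finite_edges finite_subset by blast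

lemma card_le_OPT:
  assumes "is_matching ns M" and "\<forall>N\<in>set ns. finite N"
  shows "card M \<le> OPT ns"
proof -
  have "{card M' | M'. is_matching ns M'} \<subseteq> card ` Pow (edges ns)"
    by (auto simp: is_matching_def)
  then have "finite {card M' | M'. is_matching ns M'}"
    using finite_edges[OF assms(2)] finite_subset by blast
  then show ?thesis
    unfolding OPT_def by (rule Max_ge) (use assms(1) in blast)
qed

section \<open>Matchings along an alternating path\<close>

definition private_path :: "graph \<Rightarrow> nat list \<Rightarrow> nat list \<Rightarrow> bool" where
  "private_path ns rs us \<longleftrightarrow> (\<forall>a q. a < length ns \<longrightarrow> q < length rs \<longrightarrow> rs ! q \<in> ns ! a \<longrightarrow>
      (\<exists>p<length us. a = us ! p \<and> (p = q \<or> Suc p = q)))"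

lemma private_pathD:
  assumes "private_path ns rs us" and "is_matching ns M" and "(a, rs ! q) \<in> M" and "q < length rs"
  obtains p where "p < length us" "a = us ! p" "p = q \<or> Suc p = q"
  using assms is_matching_edge unfolding private_path_def by blast

lemma matched_shifted_if_first_free:
  assumes M: "is_matching ns M"
    and path: "\<forall>p<m. ns ! (us ! p) = {rs ! p, rs ! Suc p}"
    and cov: "\<forall>p<m. Inl (us ! p) \<in> covered M"
    and free: "Inr (rs ! 0) \<notin> covered M"
    and us: "distinct us" "m \<le> length us"
  shows "\<forall>p<m. (us ! p, rs ! Suc p) \<in> M"
proof (intro allI impI)
  fix p assume "p < m"
  then show "(us ! p, rs ! Suc p) \<in> M"
  proof (induction p)
    case 0
    obtain r where r: "(us ! 0, r) \<in> M" using cov 0 by (auto simp: covered_Inl)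
    then have "r = rs ! 0 \<or> r = rs ! 1" using is_matching_edge[OF M] path 0 by auto
    with r free show ?case by (auto simp: covered_Inr)
  next
    case (Suc p)
    obtain r where r: "(us ! Suc p, r) \<in> M" using cov Suc.prems by (auto simp: covered_Inl)
    then have "r = rs ! Suc p \<or> r = rs ! Suc (Suc p)" using is_matching_edge[OF M] path Suc.prems by auto
    moreover have "(us ! p, rs ! Suc p) \<in> M" using Suc by simp
    moreover have "us ! p \<noteq> us ! Suc p" using us Suc.prems by (simp add: nth_eq_iff_index_eq)
    ultimately show ?case using r is_matching_left_unique[OF M] by blast
  qed
qed

lemma matched_aligned_if_first_aligned:
  assumes M: "is_matching ns M"
    and priv: "private_path ns rs us"
    and first: "(us ! 0, rs ! 0) \<in> M"
    and cov: "\<forall>q. 1 \<le> q \<and> q \<le> n \<longrightarrow> Inr (rs ! q) \<in> covered M"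
    and len: "n < length us" "length us \<le> length rs"
    and rs: "distinct rs"
  shows "\<forall>p\<le>n. (us ! p, rs ! p) \<in> M"
proof (intro allI impI)
  fix p assume "p \<le> n"
  then show "(us ! p, rs ! p) \<in> M"
  proof (induction p)
    case 0
    then show ?case using first by simp
  next
    case (Suc p)
    obtain a where a: "(a, rs ! Suc p) \<in> M" using cov Suc.prems by (auto simp: covered_Inr)
    obtain p' where p': "a = us ! p'" "p' = Suc p \<or> Suc p' = Suc p"
      using private_pathD[OF priv M a] Suc.prems len by auto
    have "(us ! p, rs ! p) \<in> M" using Suc by simp
    moreover have "rs ! p \<noteq> rs ! Suc p" using rs Suc.prems len by (simp add: nth_eq_iff_index_eq)
    ultimately have "p' \<noteq> p" using a p' is_matching_right_unique[OF M] by blast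
    then show ?case using p' a by auto
  qed
qed

lemma matched_aligned_if_last_aligned:
  assumes M: "is_matching ns M"
    and path: "\<forall>p<n. ns ! (us ! p) = {rs ! p, rs ! Suc p}"
    and cov: "\<forall>p<n. Inl (us ! p) \<in> covered M"
    and last: "(us ! n, rs ! n) \<in> M"
    and us: "distinct us" "n < length us"
  shows "\<forall>p\<le>n. (us ! p, rs ! p) \<in> M"
proof -
  have "(us ! (n - d), rs ! (n - d)) \<in> M" if "d \<le> n" for d
    using that
  proof (induction d)
    case 0
    then show ?case using last by simp
  next
    case (Suc d)
    define p where "p = n - Suc d"
    have p: "p < n" "Suc p = n - d" using Suc.prems by (auto simp: p_def)
    obtain r where r: "(us ! p, r) \<in> M" using cov p by (auto simp: covered_Inl)
    then have "r \<in> ns ! (us ! p)" using is_matching_edge[OF M] by blast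
    then have "r = rs ! p \<or> r = rs ! Suc p" using path p by auto
    moreover have "(us ! Suc p, rs ! Suc p) \<in> M" using Suc p by simp
    moreover have "us ! p \<noteq> us ! Suc p" using us p by (simp add: nth_eq_iff_index_eq)
    ultimately have "r = rs ! p" using r is_matching_left_unique[OF M] by blast
    then show ?case using r p_def by simp
  qed
  from this[of "n - p" for p] show ?thesis by (metis diff_diff_cancel diff_le_self)
qed

lemma reassignments_path_switch:
  assumes M2: "is_matching ns M2"
    and fin: "finite M1" "finite M2"
    and len: "length rs = Suc l" "length us = Suc l"
    and dist: "distinct rs" "distinct us"
    and shifted: "\<forall>p<l. (us ! p, rs ! Suc p) \<in> M1"
    and aligned: "\<forall>p\<le>l. (us ! p, rs ! p) \<in> M2"
    and last_free: "Inl (us ! l) \<notin> covered M1"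
    and first_free: "Inr (rs ! 0) \<notin> covered M1"
  shows "2 * Suc l \<le> reassignments M1 M2"
proof -
  define S where "S = (M1 - M2) \<union> (M2 - M1)"
  have shifted_S: "Inl (us ! p) \<in> covered S \<and> Inr (rs ! Suc p) \<in> covered S" if "p < l" for p
  proof -
    have "rs ! p \<noteq> rs ! Suc p" using dist len that by (simp add: nth_eq_iff_index_eq)
    then have "(us ! p, rs ! Suc p) \<notin> M2"
      using aligned that is_matching_right_unique[OF M2] by (meson less_imp_le)
    then have "(us ! p, rs ! Suc p) \<in> S" using shifted that by (simp add: S_def)
    then show ?thesis by (auto simp: covered_Inl covered_Inr)
  qed
  have "(us ! l, rs ! l) \<in> S" "(us ! 0, rs ! 0) \<in> S"
    using aligned last_free first_free by (auto simp: S_def covered_Inl covered_Inr)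
  then have ends_S: "Inl (us ! l) \<in> covered S" "Inr (rs ! 0) \<in> covered S"
    by (auto simp: covered_Inl covered_Inr)
  have sub: "Inl ` set us \<union> Inr ` set rs \<subseteq> covered S"
  proof
    fix x assume "x \<in> Inl ` set us \<union> Inr ` set rs"
    then consider (L) p where "p \<le> l" "x = Inl (us ! p)" | (R) q where "q \<le> l" "x = Inr (rs ! q)"
      using len by (auto simp: in_set_conv_nth less_Suc_eq_le)
    then show "x \<in> covered S"
    proof cases
      case L
      then show ?thesis using shifted_S ends_S by (cases "p = l") auto
    next
      case R
      then show ?thesis using shifted_S ends_S by (cases q) auto
    qed
  qed
  have "2 * Suc l = card (Inl ` set us \<union> Inr ` set rs)"
    using dist len by (subst card_Un_disjoint) (auto simp: card_image distinct_card)
  also have "\<dots> \<le> card (covered S)"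
    using sub by (rule card_mono[rotated]) (simp add: S_def fin finite_covered)
  finally show ?thesis by (simp add: reassignments_def S_def)
qed

lemma shifted_covered:
  assumes "\<forall>p<l. (us ! p, rs ! Suc p) \<in> M"
  shows "\<forall>p<l. Inl (us ! p) \<in> covered M"
    and "\<forall>q. 1 \<le> q \<and> q \<le> l \<longrightarrow> Inr (rs ! q) \<in> covered M"
proof -
  show "\<forall>p<l. Inl (us ! p) \<in> covered M"
    using assms by (auto simp: covered_Inl)
  show "\<forall>q. 1 \<le> q \<and> q \<le> l \<longrightarrow> Inr (rs ! q) \<in> covered M"
  proof (intro allI impI)
    fix q assume "1 \<le> q \<and> q \<le> l"
    then obtain p where "q = Suc p" "p < l" by (cases q) auto
    then show "Inr (rs ! q) \<in> covered M" using assms by (auto simp: covered_Inr)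
  qed
qed

lemma sealed_path_stable:
  assumes M2: "is_matching ns M2"
    and fin: "finite M1" "finite M2"
    and mono: "covered M1 \<subseteq> covered M2"
    and budget: "reassignments M1 M2 \<le> 2 * l"
    and len: "length rs = Suc l" "length us = Suc l"
    and dist: "distinct rs" "distinct us"
    and path: "\<forall>p<l. ns ! (us ! p) = {rs ! p, rs ! Suc p}"
    and trap: "ns ! (us ! l) = {rs ! l}"
    and priv: "private_path ns rs us"
    and shifted: "\<forall>p<l. (us ! p, rs ! Suc p) \<in> M1"
    and last_free: "Inl (us ! l) \<notin> covered M1"
    and first_free: "Inr (rs ! 0) \<notin> covered M1"
  shows "(\<forall>p<l. (us ! p, rs ! Suc p) \<in> M2) \<and>
    Inl (us ! l) \<notin> covered M2 \<and> Inr (rs ! 0) \<notin> covered M2"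
proof -
  have cov_us: "\<forall>p<l. Inl (us ! p) \<in> covered M2"
    and cov_rs: "\<forall>q. 1 \<le> q \<and> q \<le> l \<longrightarrow> Inr (rs ! q) \<in> covered M2"
    using shifted_covered[OF shifted] mono by blast+
  have no_alignment: "\<not> (\<forall>p\<le>l. (us ! p, rs ! p) \<in> M2)"
    using reassignments_path_switch[OF M2 fin len dist shifted _ last_free first_free] budget by auto
  have last_free2: "Inl (us ! l) \<notin> covered M2"
  proof
    assume "Inl (us ! l) \<in> covered M2"
    then obtain r where "(us ! l, r) \<in> M2" by (auto simp: covered_Inl)
    moreover have "r \<in> ns ! (us ! l)" using calculation is_matching_edge[OF M2] by blast
    ultimately have "(us ! l, rs ! l) \<in> M2" using trap by simp
    then show False
      using matched_aligned_if_last_aligned[OF M2 path cov_us] dist len no_alignment by simp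
  qed
  have first_free2: "Inr (rs ! 0) \<notin> covered M2"
  proof
    assume "Inr (rs ! 0) \<in> covered M2"
    then obtain a where a: "(a, rs ! 0) \<in> M2" by (auto simp: covered_Inr)
    then have "a = us ! 0" using private_pathD[OF priv M2 a] len by auto
    then show False
      using matched_aligned_if_first_aligned[OF M2 priv _ cov_rs] a len dist no_alignment by simp
  qed
  show ?thesis
    using matched_shifted_if_first_free[OF M2 path cov_us first_free2] dist len last_free2 first_free2
    by simp
qed

lemma path_rev:
  assumes len: "length rs = Suc m" "length us = m"
    and path: "\<forall>p<m. ns ! (us ! p) = {rs ! p, rs ! Suc p}"
  shows "\<forall>p<m. ns ! (rev us ! p) = {rev rs ! p, rev rs ! Suc p}"
proof (intro allI impI)
  fix p assume p: "p < m"
  have "ns ! (us ! (m - Suc p)) = {rs ! (m - Suc p), rs ! Suc (m - Suc p)}" using path p by simp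
  moreover have "Suc (m - Suc p) = m - p" using p by simp
  ultimately show "ns ! (rev us ! p) = {rev rs ! p, rev rs ! Suc p}"
    using p len by (auto simp: rev_nth)
qed

lemma ready_path_aligned_if_first_covered:
  assumes M: "is_matching ns M"
    and len: "length rs = Suc m" "length us = m" "0 < m"
    and rs: "distinct rs"
    and priv: "private_path ns rs us"
    and interior: "\<forall>q. 0 < q \<and> q < m \<longrightarrow> Inr (rs ! q) \<in> covered M"
    and first: "Inr (rs ! 0) \<in> covered M"
  shows "(\<forall>p<m. (us ! p, rs ! p) \<in> M) \<and> Inr (rs ! m) \<notin> covered M"
proof
  obtain a where a: "(a, rs ! 0) \<in> M" using first by (auto simp: covered_Inr)
  then have "a = us ! 0" using private_pathD[OF priv M a] len by auto
  moreover have "\<forall>q. 1 \<le> q \<and> q \<le> m - 1 \<longrightarrow> Inr (rs ! q) \<in> covered M"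
    using interior by auto
  ultimately have "\<forall>p\<le>m - 1. (us ! p, rs ! p) \<in> M"
    using matched_aligned_if_first_aligned[OF M priv] a len rs by simp
  then show aligned: "\<forall>p<m. (us ! p, rs ! p) \<in> M" by simp
  show "Inr (rs ! m) \<notin> covered M"
  proof
    assume "Inr (rs ! m) \<in> covered M"
    then obtain b where b: "(b, rs ! m) \<in> M" by (auto simp: covered_Inr)
    obtain p where "p < m" "b = us ! p" "p = m \<or> Suc p = m"
      using private_pathD[OF priv M b] len by auto
    then have "(b, rs ! (m - 1)) \<in> M" using aligned by auto
    then have "rs ! m = rs ! (m - 1)" using b is_matching_right_unique[OF M] by blast
    then show False using rs len by (simp add: nth_eq_iff_index_eq)
  qed
qed

definition orient :: "matching \<Rightarrow> nat list \<Rightarrow> nat list \<Rightarrow> nat list \<times> nat list" where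
  "orient M rs us = (if Inr (hd rs) \<in> covered M then (rev rs, rev us) else (rs, us))"

lemma orient_length: "orient M rs us = (rs', us') \<Longrightarrow> length us' = length us"
  by (auto simp: orient_def split: if_splits)

definition shifted_path :: "graph \<Rightarrow> matching \<Rightarrow> nat list \<Rightarrow> nat list \<Rightarrow> bool" where
  "shifted_path ns M rs us \<longleftrightarrow> length rs = Suc (length us) \<and> distinct rs \<and> distinct us \<and>
     (\<forall>p<length us. ns ! (us ! p) = {rs ! p, rs ! Suc p}) \<and>
     Inr (rs ! 0) \<notin> covered M \<and> (\<forall>p<length us. (us ! p, rs ! Suc p) \<in> M)"

lemma orient_ready_path:
  assumes M: "is_matching ns M"
    and len: "length rs = Suc m" "length us = m" "0 < m"
    and dist: "distinct rs" "distinct us"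
    and path: "\<forall>p<m. ns ! (us ! p) = {rs ! p, rs ! Suc p}"
    and priv: "private_path ns rs us"
    and ready: "\<forall>p<m. Inl (us ! p) \<in> covered M"
    and interior: "\<forall>q. 0 < q \<and> q < m \<longrightarrow> Inr (rs ! q) \<in> covered M"
    and o: "orient M rs us = (rs', us')"
  shows "set rs' = set rs \<and> set us' = set us \<and> shifted_path ns M rs' us'"
proof -
  have hd: "hd rs = rs ! 0" using len by (cases rs) auto
  show ?thesis
  proof (cases "Inr (rs ! 0) \<in> covered M")
    case True
    then have rs': "rs' = rev rs" "us' = rev us"
      using o hd by (auto simp: orient_def)
    have "(\<forall>p<m. (us ! p, rs ! p) \<in> M) \<and> Inr (rs ! m) \<notin> covered M"
      using ready_path_aligned_if_first_covered[OF M len dist(1) priv interior True] .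
    moreover have "rev us ! p = us ! (m - Suc p) \<and> rev rs ! Suc p = rs ! (m - Suc p)" if "p < m" for p
      using that len by (simp add: rev_nth)
    ultimately show ?thesis
      using rs' len dist path_rev[OF len(1,2) path] by (simp add: rev_nth shifted_path_def)
  next
    case False
    then have "rs' = rs" "us' = us"
      using o hd by (auto simp: orient_def)
    then show ?thesis
      using matched_shifted_if_first_free[OF M path ready False dist(2)] len dist path False
      by (simp add: shifted_path_def)
  qed
qed

section \<open>Gadgets\<close>

datatype gadget = Gadget (rights: "nat list") (lefts: "nat list") (sealed: bool)

definition gadget_shape :: "nat \<Rightarrow> nat \<Rightarrow> graph \<Rightarrow> gadget \<Rightarrow> bool" where
  "gadget_shape l t ns g \<longleftrightarrow>
     0 < length (lefts g) \<and> distinct (lefts g) \<and> distinct (rights g) \<and>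
     set (lefts g) \<subseteq> {..<t} \<and> set (rights g) \<subseteq> {..<2*t} \<and>
     (if sealed g then length (rights g) = Suc l \<and> length (lefts g) = Suc l \<and>
        (\<forall>p<l. ns ! (lefts g ! p) = {rights g ! p, rights g ! Suc p}) \<and>
        ns ! (lefts g ! l) = {rights g ! l}
      else length (rights g) = Suc (length (lefts g)) \<and> length (lefts g) \<le> l \<and>
        (\<forall>p<length (lefts g). ns ! (lefts g ! p) = {rights g ! p, rights g ! Suc p}))"

definition well_formed :: "nat \<Rightarrow> nat \<Rightarrow> graph \<Rightarrow> gadget list \<Rightarrow> bool" where
  "well_formed l t ns gs \<longleftrightarrow> length ns = t \<and> (\<forall>N\<in>set ns. N \<subseteq> {..<2*t}) \<and>
     (\<forall>g\<in>set gs. gadget_shape l t ns g) \<and>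
     disjoint_family_on (\<lambda>j. set (lefts (gs ! j))) {..<length gs} \<and>
     disjoint_family_on (\<lambda>j. set (rights (gs ! j))) {..<length gs} \<and>
     (\<Union>g\<in>set gs. set (lefts g)) = {..<t} \<and> length gs \<le> t"

definition gadget_matched :: "nat \<Rightarrow> matching \<Rightarrow> gadget \<Rightarrow> bool" where
  "gadget_matched l M g \<longleftrightarrow>
     (\<not> sealed g \<longrightarrow>
        (\<forall>q. 0 < q \<and> q < length (lefts g) \<longrightarrow> Inr (rights g ! q) \<in> covered M)) \<and>
     (sealed g \<longrightarrow> (\<forall>p<l. (lefts g ! p, rights g ! Suc p) \<in> M) \<and>
        Inl (lefts g ! l) \<notin> covered M \<and> Inr (rights g ! 0) \<notin> covered M)"

definition matching_inv :: "nat \<Rightarrow> graph \<Rightarrow> gadget list \<Rightarrow> matching \<Rightarrow> bool" where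
  "matching_inv l ns gs M \<longleftrightarrow> is_matching ns M \<and> (\<forall>g\<in>set gs. gadget_matched l M g)"

lemma gadget_shape_nbhd:
  assumes g: "gadget_shape l t ns g" and p: "p < length (lefts g)"
  shows "ns ! (lefts g ! p) \<subseteq> set (rights g) \<and> rights g ! p \<in> ns ! (lefts g ! p)"
proof (cases "sealed g")
  case True
  then show ?thesis
    using g p by (cases "p = l") (auto simp: gadget_shape_def)
next
  case False
  then show ?thesis
    using g p by (auto simp: gadget_shape_def)
qed

lemma gadget_shape_lengths:
  assumes "gadget_shape l t ns g"
  shows "length (lefts g) \<le> Suc l \<and> length (lefts g) \<le> length (rights g)"
  using assms by (auto simp: gadget_shape_def split: if_splits)

lemma gadget_shape_snoc:
  assumes g: "gadget_shape l t ns g" and t: "length ns = t"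
  shows "gadget_shape l (Suc t) (ns @ [N]) g"
proof -
  have same: "(ns @ [N]) ! (lefts g ! p) = ns ! (lefts g ! p)" if "p < length (lefts g)" for p
    using g t that by (auto simp: gadget_shape_def nth_append dest!: nth_mem)
  have "set (lefts g) \<subseteq> {..<Suc t}" "set (rights g) \<subseteq> {..<2 * Suc t}"
    using g by (auto simp: gadget_shape_def)
  then show ?thesis
    using g same unfolding gadget_shape_def by (simp split: if_splits)
qed

lemma well_formed_lefts_unique:
  assumes "well_formed l t ns gs" "g \<in> set gs" "h \<in> set gs" "x \<in> set (lefts g)" "x \<in> set (lefts h)"
  shows "g = h"
proof -
  obtain i j where "i < length gs" "g = gs ! i" "j < length gs" "h = gs ! j"
    using assms(2,3) by (auto simp: in_set_conv_nth)
  then show ?thesis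
    using assms disjoint_family_onD[of "\<lambda>j. set (lefts (gs ! j))" "{..<length gs}" i j]
    unfolding well_formed_def by auto
qed

lemma well_formed_rights_unique:
  assumes "well_formed l t ns gs" "g \<in> set gs" "h \<in> set gs" "x \<in> set (rights g)" "x \<in> set (rights h)"
  shows "g = h"
proof -
  obtain i j where "i < length gs" "g = gs ! i" "j < length gs" "h = gs ! j"
    using assms(2,3) by (auto simp: in_set_conv_nth)
  then show ?thesis
    using assms disjoint_family_onD[of "\<lambda>j. set (rights (gs ! j))" "{..<length gs}" i j]
    unfolding well_formed_def by auto
qed

lemma well_formed_private_path:
  assumes S: "well_formed l t ns gs" and g: "g \<in> set gs"
  shows "private_path ns (rights g) (lefts g)"
  unfolding private_path_def
proof (intro allI impI)
  fix a q assume a: "a < length ns" and q: "q < length (rights g)" and r: "rights g ! q \<in> ns ! a"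
  have "a \<in> (\<Union>g\<in>set gs. set (lefts g))" using S a by (simp add: well_formed_def)
  then obtain h p where h: "h \<in> set gs" and p: "p < length (lefts h)" "a = lefts h ! p"
    by (auto simp: in_set_conv_nth)
  have gh: "gadget_shape l t ns h" and gg: "gadget_shape l t ns g"
    using S h g by (auto simp: well_formed_def)
  have "rights g ! q \<in> set (rights h)" using gadget_shape_nbhd[OF gh p(1)] p r by blast
  moreover have "rights g ! q \<in> set (rights g)" using q by simp
  ultimately have "h = g" using well_formed_rights_unique[OF S g h] by blast
  then have nbhd: "p < length (lefts g)" "a = lefts g ! p" using p by auto
  let ?rs = "rights g"
  consider (edge) "Suc p < length ?rs" "ns ! a = {?rs ! p, ?rs ! Suc p}"
    | (trap) "p < length ?rs" "ns ! a = {?rs ! p}"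
    using gg nbhd by (cases "sealed g"; cases "p = l") (auto simp: gadget_shape_def)
  then have "q = p \<or> q = Suc p"
    using r q gg by cases (auto simp: gadget_shape_def nth_eq_iff_index_eq)
  then show "\<exists>p<length (lefts g). a = lefts g ! p \<and> (p = q \<or> Suc p = q)"
    using nbhd by blast
qed

lemma disjoint_family_on_list_update:
  assumes disj: "disjoint_family_on (\<lambda>j. F (xs ! j)) {..<length xs}"
    and y: "F y \<subseteq> F (xs ! i) \<union> X" and fresh: "\<forall>x\<in>set xs. X \<inter> F x = {}"
  shows "disjoint_family_on (\<lambda>j. F (xs[i := y] ! j)) {..<length xs}"
  unfolding disjoint_family_on_def
proof (intro ballI impI)
  fix m n assume mn: "m \<in> {..<length xs}" "n \<in> {..<length xs}" "m \<noteq> n"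
  have old: "F (xs ! a) \<inter> F (xs ! b) = {}" if "a < length xs" "b < length xs" "a \<noteq> b" for a b
    using disjoint_family_onD[OF disj] that by simp
  have new: "F y \<inter> F (xs ! b) = {}" if "i < length xs" "b < length xs" "b \<noteq> i" for b
    using old[of i b] fresh nth_mem[of b xs] y that by blast
  show "F (xs[i := y] ! m) \<inter> F (xs[i := y] ! n) = {}"
  proof (cases "m = i \<or> n = i")
    case True
    then show ?thesis
      using new[of n] new[of m] mn by (auto simp: nth_list_update)
  next
    case False
    then show ?thesis
      using old[of m n] mn by simp
  qed
qed

lemma disjoint_family_on_snoc:
  assumes disj: "disjoint_family_on (\<lambda>j. F (xs ! j)) {..<length xs}"
    and y: "\<forall>x\<in>set xs. F y \<inter> F x = {}"
  shows "disjoint_family_on (\<lambda>j. F ((xs @ [y]) ! j)) {..<Suc (length xs)}"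
  unfolding disjoint_family_on_def
proof (intro ballI impI)
  fix m n assume "m \<in> {..<Suc (length xs)}" "n \<in> {..<Suc (length xs)}" "m \<noteq> n"
  moreover have "F (xs ! a) \<inter> F (xs ! b) = {}" if "a < length xs" "b < length xs" "a \<noteq> b" for a b
    using disjoint_family_onD[OF disj] that by simp
  moreover have "F y \<inter> F (xs ! b) = {}" if "b < length xs" for b
    using y that by simp
  ultimately show "F ((xs @ [y]) ! m) \<inter> F ((xs @ [y]) ! n) = {}"
    by (cases "m = length xs"; cases "n = length xs") (auto simp: nth_append less_Suc_eq)
qed

lemma set_subset_list_update: "set xs \<subseteq> insert (xs ! i) (set (xs[i := y]))"
proof
  fix x assume "x \<in> set xs"
  then obtain j where j: "j < length xs" "x = xs ! j" by (auto simp: in_set_conv_nth)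
  show "x \<in> insert (xs ! i) (set (xs[i := y]))"
  proof (cases "j = i")
    case False
    then have "xs[i := y] ! j = x" using j by simp
    then show ?thesis using j by (metis insertCI length_list_update nth_mem)
  qed (use j in simp)
qed

lemma well_formed_nbhds_snoc:
  assumes "well_formed l t ns gs" and "N \<subseteq> {..<2 * Suc t}"
  shows "\<forall>N'\<in>set (ns @ [N]). N' \<subseteq> {..<2 * Suc t}"
proof -
  have "\<forall>N'\<in>set ns. N' \<subseteq> {..<2 * t}" using assms(1) by (simp add: well_formed_def)
  moreover have "{..<2 * t} \<subseteq> {..<2 * Suc t}" by auto
  ultimately have "\<forall>N'\<in>set ns. N' \<subseteq> {..<2 * Suc t}" by (meson subset_trans)
  then show ?thesis using assms(2) by simp
qed

lemma well_formed_update: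
  assumes S: "well_formed l t ns gs" and i: "i < length gs"
    and g': "gadget_shape l (Suc t) (ns @ [N]) g'" and N: "N \<subseteq> {..<2 * Suc t}"
    and lefts: "set (lefts g') = insert t (set (lefts (gs ! i)))"
    and rights: "set (rights g') \<subseteq> insert (2*t) (set (rights (gs ! i)))"
  shows "well_formed l (Suc t) (ns @ [N]) (gs[i := g'])"
proof -
  have old: "\<forall>g\<in>set gs. set (lefts g) \<subseteq> {..<t} \<and> set (rights g) \<subseteq> {..<2*t}"
    using S by (simp add: well_formed_def gadget_shape_def)
  have "\<forall>g\<in>set gs. gadget_shape l (Suc t) (ns @ [N]) g"
    using S gadget_shape_snoc by (simp add: well_formed_def)
  then have shapes: "\<forall>g\<in>set (gs[i := g']). gadget_shape l (Suc t) (ns @ [N]) g"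
    using g' set_update_subset_insert[of gs i g'] by blast
  have dl: "disjoint_family_on (\<lambda>j. set (lefts (gs[i := g'] ! j))) {..<length gs}"
    using S lefts old disjoint_family_on_list_update[where F = "\<lambda>g. set (lefts g)" and X = "{t}"]
    by (auto simp: well_formed_def)
  have "\<forall>g\<in>set gs. {2*t} \<inter> set (rights g) = {}" using old by auto
  then have dr: "disjoint_family_on (\<lambda>j. set (rights (gs[i := g'] ! j))) {..<length gs}"
    using S rights disjoint_family_on_list_update[where F = "\<lambda>g. set (rights g)" and X = "{2*t}"]
    by (auto simp: well_formed_def)
  have "(\<Union>g\<in>set (gs[i := g']). set (lefts g)) = insert t (\<Union>g\<in>set gs. set (lefts g))"
  proof
    show "(\<Union>g\<in>set (gs[i := g']). set (lefts g)) \<subseteq> insert t (\<Union>g\<in>set gs. set (lefts g))"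
      using set_update_subset_insert[of gs i g'] lefts i by auto
    show "insert t (\<Union>g\<in>set gs. set (lefts g)) \<subseteq> (\<Union>g\<in>set (gs[i := g']). set (lefts g))"
      using set_subset_list_update[of gs i g'] lefts i set_update_memI[OF i, of g'] by auto
  qed
  then have un: "(\<Union>g\<in>set (gs[i := g']). set (lefts g)) = {..<Suc t}"
    using S by (simp add: well_formed_def lessThan_Suc)
  have len: "length (ns @ [N]) = Suc t" "length gs \<le> Suc t"
    using S by (simp_all add: well_formed_def)
  show ?thesis
    unfolding well_formed_def length_list_update
    using len shapes dl dr un well_formed_nbhds_snoc[OF S N] by blast
qed

lemma well_formed_snoc:
  assumes S: "well_formed l t ns gs"
    and g: "gadget_shape l (Suc t) (ns @ [N]) g" and N: "N \<subseteq> {..<2 * Suc t}"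
    and lefts: "set (lefts g) = {t}" and rights: "set (rights g) \<inter> {..<2*t} = {}"
  shows "well_formed l (Suc t) (ns @ [N]) (gs @ [g])"
proof -
  have old: "\<forall>g\<in>set gs. set (lefts g) \<subseteq> {..<t} \<and> set (rights g) \<subseteq> {..<2*t}"
    using S by (simp add: well_formed_def gadget_shape_def)
  have "\<forall>g\<in>set gs. gadget_shape l (Suc t) (ns @ [N]) g"
    using S gadget_shape_snoc by (simp add: well_formed_def)
  then have shapes: "\<forall>g\<in>set (gs @ [g]). gadget_shape l (Suc t) (ns @ [N]) g"
    using g by simp
  have "\<forall>h\<in>set gs. set (lefts g) \<inter> set (lefts h) = {}" using old lefts by force
  then have dl: "disjoint_family_on (\<lambda>j. set (lefts ((gs @ [g]) ! j))) {..<length (gs @ [g])}"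
    using S disjoint_family_on_snoc[where F = "\<lambda>g. set (lefts g)"] by (simp add: well_formed_def)
  have "\<forall>h\<in>set gs. set (rights g) \<inter> set (rights h) = {}" using old rights by force
  then have dr: "disjoint_family_on (\<lambda>j. set (rights ((gs @ [g]) ! j))) {..<length (gs @ [g])}"
    using S disjoint_family_on_snoc[where F = "\<lambda>g. set (rights g)"] by (simp add: well_formed_def)
  have un: "(\<Union>g\<in>set (gs @ [g]). set (lefts g)) = {..<Suc t}"
    using S lefts by (simp add: well_formed_def lessThan_Suc)
  have len: "length (ns @ [N]) = Suc t" "length (gs @ [g]) \<le> Suc t"
    using S by (simp_all add: well_formed_def)
  show ?thesis
    unfolding well_formed_def
    using len shapes dl dr un well_formed_nbhds_snoc[OF S N] by blast
qed

section \<open>The adversary\<close>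

lemma gadget_matched_step:
  assumes S: "well_formed l t ns gs" and g: "g \<in> set gs"
    and M2: "is_matching ns M2" and fin: "finite M1" "finite M2"
    and mono: "covered M1 \<subseteq> covered M2" and budget: "reassignments M1 M2 \<le> 2 * l"
    and matched: "gadget_matched l M1 g"
  shows "gadget_matched l M2 g"
proof (cases "sealed g")
  case True
  have "gadget_shape l t ns g" using S g by (simp add: well_formed_def)
  then have shape: "length (rights g) = Suc l" "length (lefts g) = Suc l"
    "distinct (rights g)" "distinct (lefts g)"
    "\<forall>p<l. ns ! (lefts g ! p) = {rights g ! p, rights g ! Suc p}"
    "ns ! (lefts g ! l) = {rights g ! l}"
    using True by (simp_all add: gadget_shape_def)
  have "\<forall>p<l. (lefts g ! p, rights g ! Suc p) \<in> M1"
    "Inl (lefts g ! l) \<notin> covered M1" "Inr (rights g ! 0) \<notin> covered M1"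
    using matched True by (simp_all add: gadget_matched_def)
  with sealed_path_stable[OF M2 fin mono budget shape well_formed_private_path[OF S g]]
  show ?thesis using True by (simp add: gadget_matched_def)
next
  case False
  then show ?thesis using matched mono by (auto simp: gadget_matched_def)
qed

lemma matching_inv_step:
  assumes VA: "valid_algorithm (2 * l) A" and R: "{..<2 * Suc t} \<subseteq> R" "finite R"
    and M: "is_matching ns (alg_out A R ns)" and S': "well_formed l (Suc t) (ns @ [N]) gs'"
    and matched: "\<forall>g\<in>set gs'. gadget_matched l (alg_out A R ns) g"
  shows "matching_inv l (ns @ [N]) gs' (alg_out A R (ns @ [N]))"
proof -
  let ?M1 = "alg_out A R ns" and ?M2 = "A R (ns @ [N])"
  have nbhds: "\<forall>N'\<in>set (ns @ [N]). N' \<subseteq> {..<2 * Suc t}" using S' by (simp add: well_formed_def)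
  then have "valid_instance R ns" "N \<subseteq> R" using R by (auto simp: valid_instance_def)
  with VA have V: "is_matching (ns @ [N]) ?M2" "reassignments ?M1 ?M2 \<le> 2 * l"
    "covered ?M1 \<subseteq> covered ?M2"
    by (simp_all add: valid_algorithm_def Let_def)
  have fin: "\<forall>N'\<in>set (ns @ [N]). finite N'" using nbhds finite_subset by blast
  have "finite ?M1" "finite ?M2"
    using finite_matching[OF M] finite_matching[OF V(1)] fin by auto
  then have "\<forall>g\<in>set gs'. gadget_matched l ?M2 g"
    using gadget_matched_step[OF S' _ V(1) _ _ V(3) V(2)] matched by blast
  then show ?thesis using V(1) by (simp add: matching_inv_def alg_out_def)
qed

definition is_ready :: "matching \<Rightarrow> gadget \<Rightarrow> bool" where
  "is_ready M g \<longleftrightarrow> \<not> sealed g \<and> (\<forall>u\<in>set (lefts g). Inl u \<in> covered M)"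

(* Arrival t uses the fresh right vertices 2t and 2t + 1. Since orient puts the free end of
   a ready path first, the arrival attaches to the matched end last rs. *)
fun adv_step :: "algorithm \<Rightarrow> nat set \<Rightarrow> nat \<Rightarrow> graph \<times> gadget list \<Rightarrow> graph \<times> gadget list" where
  "adv_step A R l (ns, gs) = (let M = alg_out A R ns; t = length ns in
     if \<exists>i<length gs. is_ready M (gs ! i) then
       (let i = LEAST i. i < length gs \<and> is_ready M (gs ! i);
            (rs, us) = orient M (rights (gs ! i)) (lefts (gs ! i)) in
        if length us = l then (ns @ [{last rs}], gs[i := Gadget rs (us @ [t]) True])
        else (ns @ [{last rs, 2*t}], gs[i := Gadget (rs @ [2*t]) (us @ [t]) False]))
     else (ns @ [{2*t, Suc (2*t)}], gs @ [Gadget [2*t, Suc (2*t)] [t] False]))"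

lemma ready_gadget_oriented:
  assumes S: "well_formed l t ns gs" and Mi: "matching_inv l ns gs M"
    and g: "g \<in> set gs" and ready: "is_ready M g"
    and o: "orient M (rights g) (lefts g) = (rs, us)"
  shows "set rs = set (rights g) \<and> set us = set (lefts g) \<and> shifted_path ns M rs us \<and>
    0 < length us \<and> length us \<le> l"
proof -
  have shape: "gadget_shape l t ns g" using S g by (simp add: well_formed_def)
  have open_g: "\<not> sealed g" using ready by (simp add: is_ready_def)
  have "\<forall>q. 0 < q \<and> q < length (lefts g) \<longrightarrow> Inr (rights g ! q) \<in> covered M"
    using Mi g open_g by (simp add: matching_inv_def gadget_matched_def)
  moreover have "\<forall>p<length (lefts g). Inl (lefts g ! p) \<in> covered M"
    using ready by (simp add: is_ready_def)
  moreover have "private_path ns (rights g) (lefts g)" using well_formed_private_path[OF S g] .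
  moreover have "is_matching ns M" using Mi by (simp add: matching_inv_def)
  ultimately have "set rs = set (rights g) \<and> set us = set (lefts g) \<and> shifted_path ns M rs us"
    using orient_ready_path[OF _ _ refl, of ns M "rights g"] shape open_g o by (simp add: gadget_shape_def)
  moreover have "length us = length (lefts g)" using orient_length[OF o] .
  ultimately show ?thesis using shape open_g by (simp add: gadget_shape_def)
qed

lemma gadget_matched_update:
  assumes "\<forall>g\<in>set gs. gadget_matched l M g" and "gadget_matched l M g'"
  shows "\<forall>g\<in>set (gs[i := g']). gadget_matched l M g"
  using assms set_update_subset_insert[of gs i g'] by blast

lemma shifted_path_nbhds_snoc:
  assumes "shifted_path ns M rs us" and "set us \<subseteq> {..<length ns}"
  shows "\<forall>p<length us. (ns @ [N]) ! (us ! p) = {rs ! p, rs ! Suc p}"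
  using assms by (auto simp: shifted_path_def nth_append dest!: nth_mem)

lemma seal_step:
  assumes S: "well_formed l t ns gs" and M: "is_matching ns M"
    and matched: "\<forall>g\<in>set gs. gadget_matched l M g"
    and i: "i < length gs" and sh: "shifted_path ns M rs us" and len: "length us = l"
    and rs: "set rs = set (rights (gs ! i))" and us: "set us = set (lefts (gs ! i))"
  defines "g' \<equiv> Gadget rs (us @ [t]) True"
  shows "well_formed l (Suc t) (ns @ [{last rs}]) (gs[i := g']) \<and>
    (\<forall>g\<in>set (gs[i := g']). gadget_matched l M g)"
proof
  have t: "length ns = t" using S by (simp add: well_formed_def)
  have old: "set us \<subseteq> {..<t}" "set rs \<subseteq> {..<2*t}"
    using S i us rs by (auto simp: well_formed_def gadget_shape_def)
  have ne: "rs \<noteq> []" using sh by (auto simp: shifted_path_def)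
  then have last: "last rs = rs ! l" using sh len by (simp add: last_conv_nth shifted_path_def)
  have "last rs < 2*t" using ne old(2) by (meson last_in_set lessThan_iff subsetD)
  then have N: "{last rs} \<subseteq> {..<2 * Suc t}" by simp
  have "gadget_shape l (Suc t) (ns @ [{last rs}]) g'"
    using sh old len t last shifted_path_nbhds_snoc[OF sh, of "{last rs}"]
    by (auto simp: gadget_shape_def g'_def shifted_path_def nth_append)
  then show "well_formed l (Suc t) (ns @ [{last rs}]) (gs[i := g'])"
    by (rule well_formed_update[OF S i _ N]) (use rs us in \<open>auto simp: g'_def\<close>)
  have "Inl t \<notin> covered M" using M t is_matching_edge by (auto simp: covered_Inl)
  then have "gadget_matched l M g'"
    using sh len by (simp add: gadget_matched_def shifted_path_def g'_def nth_append)
  then show "\<forall>g\<in>set (gs[i := g']). gadget_matched l M g"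
    by (rule gadget_matched_update[OF matched])
qed

lemma extend_step:
  assumes S: "well_formed l t ns gs"
    and matched: "\<forall>g\<in>set gs. gadget_matched l M g"
    and i: "i < length gs" and sh: "shifted_path ns M rs us" and len: "length us < l"
    and rs: "set rs = set (rights (gs ! i))" and us: "set us = set (lefts (gs ! i))"
  defines "g' \<equiv> Gadget (rs @ [2*t]) (us @ [t]) False"
  shows "well_formed l (Suc t) (ns @ [{last rs, 2*t}]) (gs[i := g']) \<and>
    (\<forall>g\<in>set (gs[i := g']). gadget_matched l M g)"
proof
  have t: "length ns = t" using S by (simp add: well_formed_def)
  have old: "set us \<subseteq> {..<t}" "set rs \<subseteq> {..<2*t}"
    using S i us rs by (auto simp: well_formed_def gadget_shape_def)
  have ne: "rs \<noteq> []" using sh by (auto simp: shifted_path_def)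
  then have last: "last rs = rs ! length us" using sh by (simp add: last_conv_nth shifted_path_def)
  have "last rs < 2*t" using ne old(2) by (meson last_in_set lessThan_iff subsetD)
  then have N: "{last rs, 2*t} \<subseteq> {..<2 * Suc t}" by simp
  have "(ns @ [{last rs, 2*t}]) ! ((us @ [t]) ! p) = {(rs @ [2*t]) ! p, (rs @ [2*t]) ! Suc p}"
    if "p < Suc (length us)" for p
    using that shifted_path_nbhds_snoc[OF sh, of "{last rs, 2*t}"] sh old t last
    by (cases "p = length us") (auto simp: nth_append shifted_path_def)
  then have "gadget_shape l (Suc t) (ns @ [{last rs, 2*t}]) g'"
    using sh old len by (auto simp: gadget_shape_def g'_def shifted_path_def)
  then show "well_formed l (Suc t) (ns @ [{last rs, 2*t}]) (gs[i := g'])"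
    by (rule well_formed_update[OF S i _ N]) (use rs us in \<open>auto simp: g'_def\<close>)
  have "Inr (rs ! q) \<in> covered M" if "0 < q" "q < Suc (length us)" for q
    using sh that by (auto simp: shifted_path_def covered_Inr gr0_conv_Suc)
  then have "gadget_matched l M g'"
    using sh by (auto simp: gadget_matched_def shifted_path_def g'_def nth_append)
  then show "\<forall>g\<in>set (gs[i := g']). gadget_matched l M g"
    by (rule gadget_matched_update[OF matched])
qed

lemma new_gadget_step:
  assumes S: "well_formed l t ns gs" and l: "1 \<le> l"
    and matched: "\<forall>g\<in>set gs. gadget_matched l M g"
  defines "g' \<equiv> Gadget [2*t, Suc (2*t)] [t] False"
  shows "well_formed l (Suc t) (ns @ [{2*t, Suc (2*t)}]) (gs @ [g']) \<and>
    (\<forall>g\<in>set (gs @ [g']). gadget_matched l M g)"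
proof
  have t: "length ns = t" using S by (simp add: well_formed_def)
  have "gadget_shape l (Suc t) (ns @ [{2*t, Suc (2*t)}]) g'"
    using l t by (simp add: gadget_shape_def g'_def nth_append)
  then show "well_formed l (Suc t) (ns @ [{2*t, Suc (2*t)}]) (gs @ [g'])"
    by (rule well_formed_snoc[OF S]) (auto simp: g'_def)
  show "\<forall>g\<in>set (gs @ [g']). gadget_matched l M g"
    using matched by (simp add: gadget_matched_def g'_def)
qed

lemma adv_step_inv:
  assumes l: "1 \<le> l" and VA: "valid_algorithm (2 * l) A" and R: "{..<2 * Suc t} \<subseteq> R" "finite R"
    and S: "well_formed l t ns gs" and Mi: "matching_inv l ns gs (alg_out A R ns)"
    and st: "adv_step A R l (ns, gs) = (ns', gs')"
  shows "well_formed l (Suc t) ns' gs' \<and> matching_inv l ns' gs' (alg_out A R ns')"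
proof -
  let ?M = "alg_out A R ns"
  have M: "is_matching ns ?M" and matched: "\<forall>g\<in>set gs. gadget_matched l ?M g"
    using Mi by (simp_all add: matching_inv_def)
  have t: "length ns = t" using S by (simp add: well_formed_def)
  have "\<exists>N. ns' = ns @ [N] \<and> well_formed l (Suc t) ns' gs' \<and>
    (\<forall>g\<in>set gs'. gadget_matched l ?M g)"
  proof (cases "\<exists>i<length gs. is_ready ?M (gs ! i)")
    case True
    define i where "i = (LEAST i. i < length gs \<and> is_ready ?M (gs ! i))"
    have i: "i < length gs" "is_ready ?M (gs ! i)"
      using LeastI_ex[OF True] by (simp_all add: i_def)
    obtain rs us where o: "orient ?M (rights (gs ! i)) (lefts (gs ! i)) = (rs, us)"
      by fastforce
    have O: "set rs = set (rights (gs ! i)) \<and> set us = set (lefts (gs ! i)) \<and>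
      shifted_path ns ?M rs us \<and> 0 < length us \<and> length us \<le> l"
      using ready_gadget_oriented[OF S Mi nth_mem[OF i(1)] i(2) o] .
    have step: "adv_step A R l (ns, gs) =
      (if length us = l then (ns @ [{last rs}], gs[i := Gadget rs (us @ [t]) True])
       else (ns @ [{last rs, 2*t}], gs[i := Gadget (rs @ [2*t]) (us @ [t]) False]))"
      using True o t by (simp add: Let_def i_def[symmetric])
    show ?thesis
    proof (cases "length us = l")
      case True
      then show ?thesis using seal_step[OF S M matched i(1)] O st step by auto
    next
      case False
      then show ?thesis using extend_step[OF S matched i(1)] O st step by auto
    qed
  next
    case False
    then have "adv_step A R l (ns, gs) =
      (ns @ [{2*t, Suc (2*t)}], gs @ [Gadget [2*t, Suc (2*t)] [t] False])"
      using t by (simp only: adv_step.simps Let_def if_False)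
    then show ?thesis using new_gadget_step[OF S l matched] st by auto
  qed
  then show ?thesis using matching_inv_step[OF VA R M] by blast
qed

primrec adversary :: "algorithm \<Rightarrow> nat set \<Rightarrow> nat \<Rightarrow> nat \<Rightarrow> graph \<times> gadget list" where
  "adversary A R l 0 = ([], [])"
| "adversary A R l (Suc n) = adv_step A R l (adversary A R l n)"

definition adversary_inv :: "algorithm \<Rightarrow> nat set \<Rightarrow> nat \<Rightarrow> nat \<Rightarrow> bool" where
  "adversary_inv A R l n \<longleftrightarrow> (case adversary A R l n of (ns, gs) \<Rightarrow>
     well_formed l n ns gs \<and> matching_inv l ns gs (alg_out A R ns))"

lemma adversary_inv_holds:
  assumes l: "1 \<le> l" and VA: "valid_algorithm (2 * l) A" and R: "{..<2 * T} \<subseteq> R" "finite R"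
  shows "n \<le> T \<Longrightarrow> adversary_inv A R l n"
proof (induction n)
  case 0
  show ?case
    by (simp add: adversary_inv_def well_formed_def matching_inv_def alg_out_def is_matching_def
      disjoint_family_on_def)
next
  case (Suc n)
  obtain ns gs where st: "adversary A R l n = (ns, gs)" by fastforce
  have "{..<2 * Suc n} \<subseteq> R" using R(1) Suc.prems by auto
  then show ?case
    using adv_step_inv[OF l VA _ R(2)] Suc st by (auto simp: adversary_inv_def split: prod.splits)
qed

section \<open>Reaching a quiet time\<close>

definition deficit :: "nat \<Rightarrow> gadget \<Rightarrow> nat" where
  "deficit l g = (if sealed g then 0 else Suc l - length (lefts g))"

definition potential :: "nat \<Rightarrow> gadget list \<Rightarrow> nat" where
  "potential l gs = (\<Sum>g\<leftarrow>gs. deficit l g)"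

lemma potential_le:
  assumes S: "well_formed l t ns gs"
  shows "potential l gs \<le> l * t"
proof -
  have "deficit l g \<le> l" if "g \<in> set gs" for g
  proof -
    have "0 < length (lefts g)" using S that by (simp add: well_formed_def gadget_shape_def)
    then show ?thesis by (simp add: deficit_def; linarith)
  qed
  then have "potential l gs \<le> (\<Sum>g\<leftarrow>gs. l)"
    unfolding potential_def by (rule sum_list_mono)
  also have "\<dots> = length gs * l" by (simp add: sum_list_triv)
  also have "\<dots> \<le> t * l" using S by (simp add: well_formed_def)
  finally show ?thesis by (simp add: mult.commute)
qed

lemma potential_adv_step:
  assumes S: "well_formed l t ns gs" and ready: "\<exists>i<length gs. is_ready (alg_out A R ns) (gs ! i)"
  shows "potential l (snd (adv_step A R l (ns, gs))) + 1 = potential l gs"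
proof -
  let ?M = "alg_out A R ns"
  define i where "i = (LEAST i. i < length gs \<and> is_ready ?M (gs ! i))"
  have i: "i < length gs" "is_ready ?M (gs ! i)"
    using LeastI_ex[OF ready] by (simp_all add: i_def)
  obtain rs us where o: "orient ?M (rights (gs ! i)) (lefts (gs ! i)) = (rs, us)"
    by fastforce
  have open_g: "\<not> sealed (gs ! i)" using i by (simp add: is_ready_def)
  have len: "length us = length (lefts (gs ! i))" using orient_length[OF o] .
  have "length (lefts (gs ! i)) \<le> l"
    using S i open_g by (auto simp: well_formed_def gadget_shape_def dest!: nth_mem)
  moreover have "adv_step A R l (ns, gs) =
      (if length us = l then (ns @ [{last rs}], gs[i := Gadget rs (us @ [length ns]) True])
       else (ns @ [{last rs, 2 * length ns}],
             gs[i := Gadget (rs @ [2 * length ns]) (us @ [length ns]) False]))"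
    using ready o by (simp add: Let_def i_def[symmetric])
  ultimately obtain g' where g': "snd (adv_step A R l (ns, gs)) = gs[i := g']"
    and "deficit l g' + 1 = deficit l (gs ! i)"
    using open_g len by (cases "length us = l") (auto simp: deficit_def)
  moreover have "deficit l (gs ! i) \<le> potential l gs"
    unfolding potential_def using i elem_le_sum_list[of i "map (deficit l) gs"] by simp
  moreover have "potential l (gs[i := g']) = potential l gs + deficit l g' - deficit l (gs ! i)"
    unfolding potential_def using i by (simp add: map_update sum_list_update)
  ultimately show ?thesis by simp
qed

definition quiet :: "algorithm \<Rightarrow> nat set \<Rightarrow> nat \<Rightarrow> nat \<Rightarrow> bool" where
  "quiet A R l n \<longleftrightarrow> (case adversary A R l n of (ns, gs) \<Rightarrow>
     \<not> (\<exists>i<length gs. is_ready (alg_out A R ns) (gs ! i)))"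

lemma quiet_within_potential:
  assumes inv: "\<forall>n\<le>T. adversary_inv A R l n"
  shows "t + d \<le> T \<Longrightarrow> potential l (snd (adversary A R l t)) \<le> d \<Longrightarrow>
    \<exists>t'. t \<le> t' \<and> t' \<le> t + d \<and> quiet A R l t'"
proof (induction d arbitrary: t)
  case (0 t)
  show ?case
  proof (rule exI, intro conjI)
    obtain ns gs where st: "adversary A R l t = (ns, gs)" by fastforce
    have "adversary_inv A R l t" using inv 0 by simp
    then have "well_formed l t ns gs" using st by (simp add: adversary_inv_def)
    then show "quiet A R l t"
      using potential_adv_step[of l t ns gs A R] 0 st by (auto simp: quiet_def)
  qed simp_all
next
  case (Suc d t)
  obtain ns gs where st: "adversary A R l t = (ns, gs)" by fastforce
  show ?case
  proof (cases "quiet A R l t")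
    case False
    have "adversary_inv A R l t" using inv Suc.prems by simp
    then have "well_formed l t ns gs" using st by (simp add: adversary_inv_def)
    then have "potential l (snd (adversary A R l (Suc t))) + 1 = potential l gs"
      using potential_adv_step[of l t ns gs A R] False st by (simp add: quiet_def)
    then obtain t' where "Suc t \<le> t'" "t' \<le> Suc t + d" "quiet A R l t'"
      using Suc.IH[of "Suc t"] Suc.prems st by auto
    then show ?thesis by (intro exI[of _ t']) auto
  qed auto
qed

lemma adversary_reaches_quiet_time:
  assumes l: "1 \<le> l" and VA: "valid_algorithm (2 * l) A"
  obtains R t ns gs where "t0 \<le> t" and "valid_instance R ns"
    and "well_formed l t ns gs" and "matching_inv l ns gs (alg_out A R ns)"
    and "\<not> (\<exists>i<length gs. is_ready (alg_out A R ns) (gs ! i))"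
proof -
  define T where "T = t0 + l * t0"
  define R :: "nat set" where "R = {..<2 * T}"
  have inv: "\<forall>n\<le>T. adversary_inv A R l n"
    using adversary_inv_holds[OF l VA _ finite_lessThan] by (simp add: R_def)
  have "well_formed l t0 (fst (adversary A R l t0)) (snd (adversary A R l t0))"
    using inv by (auto simp: T_def adversary_inv_def split: prod.splits)
  then obtain t where t: "t0 \<le> t" "t \<le> T" "quiet A R l t"
    using quiet_within_potential[OF inv, of t0 "l * t0"] potential_le by (fastforce simp: T_def)
  obtain ns gs where st: "adversary A R l t = (ns, gs)" by fastforce
  have S: "well_formed l t ns gs" and "matching_inv l ns gs (alg_out A R ns)"
    using inv t st by (auto simp: adversary_inv_def)
  moreover have "valid_instance R ns"
    using S t by (force simp: valid_instance_def well_formed_def R_def)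
  ultimately show ?thesis
    using that t st by (auto simp: quiet_def)
qed

section \<open>Counting at a quiet time\<close>

lemma card_avoiding_one_per_block:
  fixes U :: "'i \<Rightarrow> 'a set"
  assumes I: "finite I" and fin: "\<forall>j\<in>I. finite (U j)" and disj: "disjoint_family_on U I"
    and w: "\<forall>j\<in>I. w j \<in> U j" and size: "\<forall>j\<in>I. card (U j) \<le> Suc l"
    and S: "S \<subseteq> (\<Union>j\<in>I. U j - {w j})"
  shows "card S * Suc l \<le> l * card (\<Union>j\<in>I. U j)"
proof -
  let ?n = "card (\<Union>j\<in>I. U j)"
  have n: "?n = (\<Sum>j\<in>I. card (U j))"
    using card_UN_disjoint[OF I] fin disj by (simp add: disjoint_family_on_def)
  have "card S \<le> card (\<Union>j\<in>I. U j - {w j})"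
    using S I fin by (intro card_mono) auto
  also have "\<dots> \<le> (\<Sum>j\<in>I. card (U j - {w j}))"
    by (rule card_UN_le[OF I])
  also have "\<dots> = (\<Sum>j\<in>I. card (U j) - 1)"
    using w fin by (intro sum.cong) auto
  finally have "card S + card I \<le> (\<Sum>j\<in>I. card (U j) - 1) + card I" by simp
  also have "\<dots> = (\<Sum>j\<in>I. (card (U j) - 1) + 1)" by (simp only: sum.distrib) simp
  also have "\<dots> = ?n"
  proof -
    have "0 < card (U j)" if "j \<in> I" for j
      using w fin that card_gt_0_iff by blast
    then show ?thesis unfolding n by (intro sum.cong) auto
  qed
  finally have "(card S + card I) * Suc l \<le> ?n * Suc l" by (rule mult_le_mono1)
  moreover have "?n \<le> card I * Suc l"
    using n size sum_bounded_above[of I "\<lambda>j. card (U j)" "Suc l"] by simp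
  ultimately have "card S * Suc l + ?n \<le> ?n * Suc l" by (simp add: add_mult_distrib)
  then show ?thesis by (simp add: algebra_simps)
qed

lemma unready_gadget_unmatched_left:
  assumes shape: "gadget_shape l t ns g" and matched: "gadget_matched l M g"
    and unready: "\<not> is_ready M g"
  shows "\<exists>w\<in>set (lefts g). Inl w \<notin> covered M"
proof (cases "sealed g")
  case True
  then have "lefts g ! l \<in> set (lefts g)" using shape by (simp add: gadget_shape_def)
  moreover have "Inl (lefts g ! l) \<notin> covered M"
    using matched True by (simp add: gadget_matched_def)
  ultimately show ?thesis by blast
next
  case False
  then show ?thesis using unready by (auto simp: is_ready_def)
qed

lemma card_matching_at_quiet_time:
  assumes S: "well_formed l t ns gs" and Mi: "matching_inv l ns gs M"
    and quiet: "\<not> (\<exists>i<length gs. is_ready M (gs ! i))"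
  shows "card M * Suc l \<le> l * t"
proof -
  let ?U = "\<lambda>j. set (lefts (gs ! j))"
  have M: "is_matching ns M" using Mi by (simp add: matching_inv_def)
  have shape: "gadget_shape l t ns (gs ! j)" if "j < length gs" for j
    using S that by (simp add: well_formed_def)
  have "\<exists>w\<in>?U j. Inl w \<notin> covered M" if "j < length gs" for j
    using unready_gadget_unmatched_left[OF shape] Mi quiet that
    by (simp add: matching_inv_def)
  then obtain w where w: "\<forall>j\<in>{..<length gs}. w j \<in> ?U j \<and> Inl (w j) \<notin> covered M"
    by (metis lessThan_iff)
  have blocks: "(\<Union>j\<in>{..<length gs}. ?U j) = {..<t}"
    using S by (simp add: well_formed_def set_conv_nth) blast
  have "fst ` M \<subseteq> (\<Union>j\<in>{..<length gs}. ?U j - {w j})"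
  proof
    fix a assume "a \<in> fst ` M"
    then obtain r where ar: "(a, r) \<in> M" by auto
    then have "a \<in> {..<t}" using is_matching_edge[OF M] S by (auto simp: well_formed_def)
    then obtain j where "j < length gs" "a \<in> ?U j" using blocks by auto
    moreover have "Inl a \<in> covered M" using ar by (auto simp: covered_Inl)
    ultimately show "a \<in> (\<Union>j\<in>{..<length gs}. ?U j - {w j})" using w by auto
  qed
  moreover have "card (?U j) \<le> Suc l" if "j < length gs" for j
    using gadget_shape_lengths[OF shape[OF that]] card_length le_trans by blast
  moreover have "disjoint_family_on ?U {..<length gs}" using S by (simp add: well_formed_def)
  ultimately have "card (fst ` M) * Suc l \<le> l * card (\<Union>j\<in>{..<length gs}. ?U j)"
    using w by (intro card_avoiding_one_per_block) auto
  then show ?thesis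
    using blocks card_image[OF is_matching_inj_fst[OF M]] by simp
qed

definition alignment :: "gadget list \<Rightarrow> matching" where
  "alignment gs = (\<Union>g\<in>set gs. set (zip (lefts g) (rights g)))"

lemma alignment_iff:
  assumes S: "well_formed l t ns gs"
  shows "(a, r) \<in> alignment gs \<longleftrightarrow>
    (\<exists>g\<in>set gs. \<exists>p<length (lefts g). a = lefts g ! p \<and> r = rights g ! p)"
proof -
  have "length (lefts g) \<le> length (rights g)" if "g \<in> set gs" for g
    using S that gadget_shape_lengths[of l t ns g] by (simp add: well_formed_def)
  then show ?thesis by (auto simp: alignment_def set_zip)
qed

lemma is_matching_alignment:
  assumes S: "well_formed l t ns gs"
  shows "is_matching ns (alignment gs)"
proof (rule is_matchingI; (intro subsetI)?)
  have shape: "gadget_shape l t ns g" if "g \<in> set gs" for g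
    using S that by (simp add: well_formed_def)
  {
    fix x assume "x \<in> alignment gs"
    then obtain g p where g: "g \<in> set gs" "p < length (lefts g)"
      and x: "x = (lefts g ! p, rights g ! p)"
      using alignment_iff[OF S] by (metis prod.collapse)
    have "lefts g ! p < t" using shape[OF g(1)] g(2) by (auto simp: gadget_shape_def dest!: nth_mem)
    then show "x \<in> edges ns"
      using gadget_shape_nbhd[OF shape[OF g(1)] g(2)] S x by (simp add: edges_def well_formed_def)
  next
    fix a r b s assume "(a, r) \<in> alignment gs" "(b, s) \<in> alignment gs"
    then obtain g p h q where g: "g \<in> set gs" "p < length (lefts g)"
      and h: "h \<in> set gs" "q < length (lefts h)"
      and ab: "a = lefts g ! p" "r = rights g ! p" "b = lefts h ! q" "s = rights h ! q"
      using alignment_iff[OF S] by metis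
    have "distinct (lefts g)" "distinct (rights g)" "p < length (rights g)" "q < length (rights h)"
      using shape[OF g(1)] shape[OF h(1)] g(2) h(2) gadget_shape_lengths
      by (auto simp: gadget_shape_def intro: less_le_trans)
    then have "lefts g ! p = lefts h ! q \<longleftrightarrow> rights g ! p = rights h ! q"
      using g h well_formed_lefts_unique[OF S g(1) h(1)] well_formed_rights_unique[OF S g(1) h(1)]
      by (metis nth_eq_iff_index_eq nth_mem)
    then show "a = b \<longleftrightarrow> r = s" using ab by simp
  }
qed

lemma OPT_ge_arrivals:
  assumes S: "well_formed l t ns gs"
  shows "t \<le> OPT ns"
proof -
  have "\<forall>N\<in>set ns. finite N"
    using S finite_subset by (auto simp: well_formed_def)
  then have "card (alignment gs) \<le> OPT ns"
    by (rule card_le_OPT[OF is_matching_alignment[OF S]])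
  moreover have "fst ` alignment gs = {..<t}"
  proof -
    have "fst ` set (zip (lefts g) (rights g)) = set (lefts g)" if "g \<in> set gs" for g
    proof -
      have "length (lefts g) \<le> length (rights g)"
        using S that gadget_shape_lengths[of l t ns g] by (simp add: well_formed_def)
      then show ?thesis by (simp add: set_map[symmetric] map_fst_zip_take)
    qed
    then show ?thesis using S by (simp add: alignment_def image_UN well_formed_def)
  qed
  moreover have "finite (alignment gs)" by (simp add: alignment_def)
  ultimately show ?thesis using card_image_le[of "alignment gs" fst] by simp
qed

lemma ratio_with_slack:
  fixes a t opt :: nat and \<epsilon> c :: real
  assumes "a * Suc l \<le> l * t" and "t \<le> opt" and "\<epsilon> > 0" and "c < \<epsilon> * t"
  shows "real a < (real l / (real l + 1) + \<epsilon>) * real opt - c"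
proof -
  have "real a * (real l + 1) \<le> real l * real t"
    using assms(1) by (metis of_nat_Suc of_nat_le_iff of_nat_mult add.commute)
  then have "real a \<le> real l * real t / (real l + 1)"
    by (simp add: field_simps)
  also have "\<dots> \<le> real l / (real l + 1) * real opt"
    using assms(2) by (simp add: divide_right_mono mult_left_mono)
  finally have "real a \<le> real l / (real l + 1) * real opt" .
  moreover have "\<epsilon> * real t \<le> \<epsilon> * real opt"
    using assms(2,3) by simp
  ultimately show ?thesis using assms(4) by (simp add: algebra_simps)
qed

theorem theorem2:
  fixes k :: nat and \<epsilon> :: real and A :: algorithm and c :: real
  assumes "k \<ge> 2" and "even k" and "\<epsilon> > 0"
    and "valid_algorithm k A" and "c \<ge> 0"
  shows "\<exists>R ns. valid_instance R ns \<and>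
           real (card (alg_out A R ns))
             < (1 - 2 / (real k + 2) + \<epsilon>) * real (OPT ns) - c"
proof -
  obtain l where k: "k = 2 * l" using assms(2) by (auto elim: evenE)
  have l: "1 \<le> l" using assms(1) k by simp
  have VA: "valid_algorithm (2 * l) A" using assms(4) k by simp
  define t0 where "t0 = nat \<lceil>c / \<epsilon>\<rceil> + 1"
  obtain R t ns gs where t: "t0 \<le> t" and R: "valid_instance R ns"
    and S: "well_formed l t ns gs" and Mi: "matching_inv l ns gs (alg_out A R ns)"
    and quiet: "\<not> (\<exists>i<length gs. is_ready (alg_out A R ns) (gs ! i))"
    by (rule adversary_reaches_quiet_time[OF l VA])
  have "c / \<epsilon> < real t"
    using real_nat_ceiling_ge[of "c / \<epsilon>"] t by (simp add: t0_def)
  then have "c < \<epsilon> * real t"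
    using assms(3) by (simp add: field_simps)
  with ratio_with_slack[OF card_matching_at_quiet_time[OF S Mi quiet] OPT_ge_arrivals[OF S] assms(3)]
  have "real (card (alg_out A R ns)) < (real l / (real l + 1) + \<epsilon>) * real (OPT ns) - c" .
  moreover have "1 - 2 / (real k + 2) = real l / (real l + 1)"
    using k by (simp add: field_simps)
  ultimately show ?thesis using R by auto
qed

end
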